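(* Let $\varphi:S^1\to S^1$ be an orientation preserving circle homeomorphism with irrational rotation number $\varrho\in\mathbb{R}\setminus\mathbb{Q}$, let $\Phi:\mathbb{R}\to\mathbb{R}$ be a lift of $\varphi$, let $x_0\in\mathbb{R}$, and let $\Gamma$ be the curlicue generated by the sequence $u_n=\Phi^n(x_0)$, $n\ge 0$. Then: (1) If $\varphi=\mathcal{R}_{\varrho}$ is the rotation by $\varrho$ (i.e. $\Phi(x)=x+\varrho$ up to an integer translation), then $\Gamma$ is bounded and superficial. (2) If $\Gamma$ is bounded, then $\Gamma$ is superficial.
   Context: Identify $S^1=\mathbb{R}/\mathbb{Z}$ via $x\mapsto \exp(2\pi\imath x)$; a lift of $\varphi$ is a homeomorphism $\Phi:\mathbb{R}\to\mathbb{R}$ with $\Phi(x+1)=\Phi(x)+1$ projecting to $\varphi$. For a real sequence $u=(u_n)_{n\ge0}$, the curlicue $\Gamma(u)$ is the piecewise linear curve in $\mathbb{C}$ passing consecutively through $z_0=0$ and $z_n=\sum_{k=0}^{n-1}\exp(2\pi\imath u_k)$, $n\ge1$. The curve is bounded if its diameter is finite. For $t>0$, $\Gamma_t$ denotes the initial part of $\Gamma$ of length $t$, and $\Gamma^{\varepsilon}=\{y\in\mathbb{C}:\exists x\in\Gamma,\ |x-y|<\varepsilon\}$. An unbounded curve $\Gamma$ is superficial if $\lim_{t\to\infty} t/\mathrm{Diam}\,\Gamma_t=\infty$; a bounded curve $\Gamma$ is superficial if $\lim_{\varepsilon\to0}\mathrm{Area}(\Gamma^{\varepsilon})/\varepsilon=\infty$,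 where Area is 2-dimensional Lebesgue measure. *)

theory Defs
  imports "HOL-Analysis.Analysis"
begin

text \<open>The circle S^1 is the unit circle in the complex plane; R/Z is identified
  with it via x maps to exp(2 pi i x) = cis (2 pi x).\<close>

definition circle_map :: "real \<Rightarrow> complex" where
  "circle_map x = cis (2 * pi * x)"

definition is_lift :: "(real \<Rightarrow> real) \<Rightarrow> (complex \<Rightarrow> complex) \<Rightarrow> bool" where
  "is_lift Phi phi \<longleftrightarrow>
     (\<exists>g. homeomorphism UNIV UNIV Phi g) \<and>
     (\<forall>x. Phi (x + 1) = Phi x + 1) \<and>
     (\<forall>x. phi (circle_map x) = circle_map (Phi x))"

definition orient_pres_circle_homeo :: "(complex \<Rightarrow> complex) \<Rightarrow> bool" where
  "orient_pres_circle_homeo phi \<longleftrightarrow>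
     (\<exists>psi. homeomorphism (sphere 0 1) (sphere 0 1) phi psi) \<and>
     (\<exists>Phi. is_lift Phi phi \<and> mono Phi)"

definition rotation_number :: "(real \<Rightarrow> real) \<Rightarrow> real" where
  "rotation_number Phi = lim (\<lambda>n. ((Phi ^^ n) 0) / real n)"

text \<open>Curlicue: vertices z_n and arc-length parametrisation (every edge has length 1).\<close>
definition curl_vertex :: "(nat \<Rightarrow> real) \<Rightarrow> nat \<Rightarrow> complex" where
  "curl_vertex u n = (\<Sum>k<n. circle_map (u k))"

definition curl_param :: "(nat \<Rightarrow> real) \<Rightarrow> real \<Rightarrow> complex" where
  "curl_param u s = curl_vertex u (nat \<lfloor>s\<rfloor>)
      + of_real (s - of_int \<lfloor>s\<rfloor>) * circle_map (u (nat \<lfloor>s\<rfloor>))"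

definition curlicue :: "(nat \<Rightarrow> real) \<Rightarrow> complex set" where
  "curlicue u = curl_param u ` {0..}"

definition curlicue_init :: "(nat \<Rightarrow> real) \<Rightarrow> real \<Rightarrow> complex set" where
  "curlicue_init u t = curl_param u ` {0..t}"

definition eps_nbhd :: "complex set \<Rightarrow> real \<Rightarrow> complex set" where
  "eps_nbhd G e = {y. \<exists>x\<in>G. dist x y < e}"

definition curlicue_bounded :: "(nat \<Rightarrow> real) \<Rightarrow> bool" where
  "curlicue_bounded u \<longleftrightarrow> bounded (curlicue u)"

definition superficial :: "(nat \<Rightarrow> real) \<Rightarrow> bool" where
  "superficial u \<longleftrightarrow>
     (if curlicue_bounded u
      then filterlim (\<lambda>e. measure lebesgue (eps_nbhd (curlicue u) e) / e) at_top (at_right 0)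
      else filterlim (\<lambda>t. t / diameter (curlicue_init u t)) at_top at_top)"

end

theory Submission
  imports Defs
begin

(* Two continuous lifts of the same circle map differ by an integer constant.  Hence a lift of
   the rotation by rho is x + rho + c with c integral, the curlicue vertices are the partial
   sums of a geometric series with ratio circle_map rho, which is not 1, and the curve is bounded.

   For a general orientation preserving homeomorphism with irrational rotation number no two
   orbit points agree mod 1, since a periodic orbit mod 1 forces a rational rotation number.
   Then for every N there are N edges of the curlicue whose directions are pairwise not
   parallel.  Along N pairwise transversal unit segments one can place about N / (2 e) points
   at mutual distance at least 2 e, apart from O(1) points near the crossings, so
   Area(Gamma^e) >= pi N e / 2 - O(e^2).  As N is arbitrary, Area(Gamma^e) / e tends to
   infinity, i.e. a bounded curlicue is superficial. *)

lemma norm_circle_map [simp]: "norm (circle_map x) = 1"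
  by (simp add: circle_map_def)

lemma circle_map_add: "circle_map (x + y) = circle_map x * circle_map y"
  by (simp add: circle_map_def cis_mult distrib_left)

lemma circle_map_eq_iff: "circle_map x = circle_map y \<longleftrightarrow> x - y \<in> \<int>"
proof -
  have "circle_map x = circle_map y \<longleftrightarrow> (\<exists>n::int. 2 * pi * x = 2 * pi * y + 2 * pi * of_int n)"
    unfolding circle_map_def cis_conv_exp exp_eq by (simp add: complex_eq_iff algebra_simps)
  also have "\<dots> \<longleftrightarrow> (\<exists>n::int. x - y = of_int n)"
  proof (intro ex_cong1)
    fix n :: int
    have "2 * pi * y + 2 * pi * of_int n = 2 * pi * (y + of_int n)"
      by (simp add: algebra_simps)
    then show "2 * pi * x = 2 * pi * y + 2 * pi * of_int n \<longleftrightarrow> x - y = of_int n"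
      by auto
  qed
  finally show ?thesis by (auto simp: Ints_def)
qed

lemma Im_circle_map_mult_cnj: "Im (circle_map x * cnj (circle_map y)) = sin (2 * (x - y) * pi)"
  unfolding circle_map_def cis_cnj cis_mult by (simp add: algebra_simps)

lemma add_of_int_if_add_one:
  fixes f :: "real \<Rightarrow> real"
  assumes "\<And>x. f (x + 1) = f x + 1"
  shows "f (x + of_int k) = f x + of_int k"
proof (induction k rule: int_induct[where k = 0])
  case (step1 i)
  then show ?case using assms[of "x + of_int i"] by (simp add: add.assoc)
next
  case (step2 i)
  then show ?case using assms[of "x + of_int (i - 1)"] by (simp add: algebra_simps)
qed simp

lemma continuous_on_lift: "is_lift Phi phi \<Longrightarrow> continuous_on UNIV Phi"
  unfolding is_lift_def homeomorphism_def by auto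

lemma funpow_lift_add_of_int:
  assumes "is_lift Phi phi"
  shows "(Phi ^^ n) (x + of_int k) = (Phi ^^ n) x + of_int k"
  using assms add_of_int_if_add_one[of Phi] by (induction n) (auto simp: is_lift_def)

lemma continuous_lifts_differ_by_int:
  fixes Phi Psi :: "real \<Rightarrow> real"
  assumes "continuous_on UNIV Phi" "continuous_on UNIV Psi"
    and "\<And>x. circle_map (Phi x) = circle_map (Psi x)"
  obtains c where "c \<in> \<int>" "\<And>x. Phi x = Psi x + c"
proof -
  have int: "Phi x - Psi x \<in> \<int>" for x
    using assms(3) circle_map_eq_iff by blast
  have "(\<lambda>x. Phi x - Psi x) constant_on UNIV"
  proof (rule continuous_discrete_range_constant)
    show "continuous_on UNIV (\<lambda>x. Phi x - Psi x)"
      using assms(1,2) by (intro continuous_intros)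
    show "\<exists>e>0. \<forall>y. y \<in> UNIV \<and> Phi y - Psi y \<noteq> Phi x - Psi x \<longrightarrow>
            e \<le> norm ((Phi y - Psi y) - (Phi x - Psi x))" for x
    proof (intro exI[of _ 1] conjI allI impI)
      fix y assume "y \<in> UNIV \<and> Phi y - Psi y \<noteq> Phi x - Psi x"
      then show "1 \<le> norm ((Phi y - Psi y) - (Phi x - Psi x))"
        using Ints_nonzero_abs_ge1[OF Ints_diff[OF int int]] by simp
    qed simp
  qed simp
  then have "Phi x = Psi x + (Phi 0 - Psi 0)" for x
    unfolding constant_on_def by (metis UNIV_I add_diff_cancel_left' diff_add_cancel)
  with int that show ?thesis by blast
qed

lemma mono_lift:
  assumes "orient_pres_circle_homeo phi" "is_lift Phi phi"
  shows "mono Phi"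
proof -
  obtain Psi where Psi: "is_lift Psi phi" "mono Psi"
    using assms(1) unfolding orient_pres_circle_homeo_def by blast
  have "circle_map (Phi x) = circle_map (Psi x)" for x
    using assms(2) Psi(1) unfolding is_lift_def by metis
  then obtain c where "\<And>x. Phi x = Psi x + c"
    using continuous_lifts_differ_by_int continuous_on_lift assms(2) Psi(1) by metis
  then show ?thesis using Psi(2) unfolding mono_def by simp
qed

lemma funpow_lift_dist_le:
  assumes "is_lift Phi phi" "mono Phi"
  shows "\<bar>(Phi ^^ n) y - (Phi ^^ n) x\<bar> \<le> \<bar>y - x\<bar> + 1"
proof -
  define m where "m = \<lfloor>y - x\<rfloor>"
  have "(Phi ^^ n) (x + of_int m) \<le> (Phi ^^ n) y" "(Phi ^^ n) y \<le> (Phi ^^ n) (x + of_int (m + 1))"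
    unfolding m_def by (intro funpow_mono assms(2); linarith)+
  then have "(Phi ^^ n) x + of_int m \<le> (Phi ^^ n) y" "(Phi ^^ n) y \<le> (Phi ^^ n) x + of_int m + 1"
    unfolding funpow_lift_add_of_int[OF assms(1)] by simp_all
  moreover have "of_int m \<le> y - x" "y - x < of_int m + 1"
    unfolding m_def by linarith+
  ultimately show ?thesis by linarith
qed

lemma LIMSEQ_div_of_nat_if_bounded_deviation:
  fixes f :: "nat \<Rightarrow> real"
  assumes "\<And>n. \<bar>f n - real n * r\<bar> \<le> D"
  shows "(\<lambda>n. f n / real n) \<longlonglongrightarrow> r"
proof -
  have "(\<lambda>n. f n / real n - r) \<longlonglongrightarrow> 0"
  proof (rule Lim_null_comparison)
    show "\<forall>\<^sub>F n in sequentially. norm (f n / real n - r) \<le> D / real n"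
      using eventually_gt_at_top[of 0]
    proof eventually_elim
      case (elim n)
      then have "f n / real n - r = (f n - real n * r) / real n"
        by (simp add: field_simps)
      then show ?case using assms[of n] elim by (simp add: divide_right_mono)
    qed
  qed (rule lim_const_over_n)
  then show ?thesis by (simp only: LIM_zero_iff)
qed

lemma rotation_number_periodic_point:
  assumes L: "is_lift Phi phi" and M: "mono Phi" and k: "k > 0"
    and per: "(Phi ^^ k) y = y + of_int j"
  shows "rotation_number Phi = of_int j / real k"
proof -
  have per_mult: "(Phi ^^ (q * k)) y = y + of_int (int q * j)" for q
  proof (induction q)
    case (Suc q)
    have "(Phi ^^ (Suc q * k)) y = (Phi ^^ k) ((Phi ^^ (q * k)) y)"
      by (simp add: funpow_add)
    also have "\<dots> = (Phi ^^ k) y + of_int (int q * j)"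
      by (simp only: Suc.IH funpow_lift_add_of_int[OF L])
    also have "\<dots> = y + of_int (int (Suc q) * j)"
      using per by (simp add: algebra_simps)
    finally show ?case .
  qed simp
  define \<rho> where "\<rho> = of_int j / real k"
  define B where "B = (\<Sum>i<k. \<bar>(Phi ^^ i) y - real i * \<rho>\<bar>)"
  have deviation: "\<bar>(Phi ^^ n) y - real n * \<rho>\<bar> \<le> B" for n
  proof -
    have "(Phi ^^ n) y = (Phi ^^ (n mod k)) ((Phi ^^ (n div k * k)) y)"
      by (metis funpow_add comp_apply mod_div_mult_eq)
    also have "\<dots> = (Phi ^^ (n mod k)) y + of_int (int (n div k) * j)"
      by (simp only: per_mult funpow_lift_add_of_int[OF L])
    finally have orbit: "(Phi ^^ n) y = (Phi ^^ (n mod k)) y + of_int (int (n div k) * j)" .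
    have "real n = real (n mod k) + real (n div k) * real k"
      by (metis mod_div_mult_eq of_nat_add of_nat_mult)
    with orbit k have "(Phi ^^ n) y - real n * \<rho> = (Phi ^^ (n mod k)) y - real (n mod k) * \<rho>"
      unfolding \<rho>_def by (simp add: field_simps)
    then show ?thesis
      unfolding B_def by (simp only:) (rule member_le_sum, use k in auto)
  qed
  have "\<bar>(Phi ^^ n) 0 - real n * \<rho>\<bar> \<le> B + \<bar>y\<bar> + 1" for n
    using deviation[of n] funpow_lift_dist_le[OF L M, of n 0 y] by linarith
  then have "(\<lambda>n. (Phi ^^ n) 0 / real n) \<longlonglongrightarrow> \<rho>"
    by (rule LIMSEQ_div_of_nat_if_bounded_deviation)
  then show ?thesis unfolding rotation_number_def \<rho>_def by (rule limI)
qed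

lemma orbit_diff_not_Ints:
  assumes "is_lift Phi phi" "mono Phi" "rotation_number Phi \<notin> \<rat>" "m \<noteq> m'"
  shows "(Phi ^^ m) x - (Phi ^^ m') x \<notin> \<int>"
proof -
  have "(Phi ^^ (k + i)) x - (Phi ^^ i) x \<notin> \<int>" if "k > 0" for i k
  proof
    assume "(Phi ^^ (k + i)) x - (Phi ^^ i) x \<in> \<int>"
    then obtain j where "(Phi ^^ (k + i)) x - (Phi ^^ i) x = of_int j"
      by (rule Ints_cases)
    then have "(Phi ^^ k) ((Phi ^^ i) x) = (Phi ^^ i) x + of_int j"
      by (simp add: funpow_add[of k i])
    then have "rotation_number Phi = of_int j / real k"
      by (rule rotation_number_periodic_point[OF assms(1,2) that])
    with assms(3) show False by simp
  qed
  from this[of "max m m' - min m m'" "min m m'"] assms(4) show ?thesis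
    by (cases "m < m'") (auto simp: minus_in_Ints_iff[of "(Phi ^^ m) x - (Phi ^^ m') x", symmetric])
qed

lemma finite_pairwise_subset_exists:
  fixes R :: "'a \<Rightarrow> 'a \<Rightarrow> bool"
  assumes "infinite (UNIV :: 'a set)" "\<And>x. finite {y. R x y}" "\<And>x y. R x y \<Longrightarrow> R y x"
  obtains F where "finite F" "card F = N" "pairwise (\<lambda>x y. \<not> R x y) F"
proof -
  have "\<exists>F. finite F \<and> card F = N \<and> pairwise (\<lambda>x y. \<not> R x y) F"
  proof (induction N)
    case (Suc N)
    then obtain F where F: "finite F" "card F = N" "pairwise (\<lambda>x y. \<not> R x y) F"
      by blast
    have "finite (F \<union> (\<Union>x\<in>F. {y. R x y}))"
      using F(1) assms(2) by simp
    then obtain z where z: "z \<notin> F \<union> (\<Union>x\<in>F. {y. R x y})"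
      using ex_new_if_finite[OF assms(1)] by blast
    then have "pairwise (\<lambda>x y. \<not> R x y) (insert z F)"
      using F(3) assms(3) by (auto simp: pairwise_insert)
    with F z show ?case
      by (intro exI[of _ "insert z F"]) auto
  qed (intro exI[of _ "{}"], simp)
  with that show ?thesis by blast
qed

lemma Ints_or_half_Ints:
  fixes x :: real
  assumes "2 * x \<in> \<int>"
  shows "x \<in> \<int> \<or> x - 1/2 \<in> \<int>"
proof -
  obtain n :: int where n: "2 * x = of_int n"
    using assms by (rule Ints_cases)
  show ?thesis
  proof (cases "even n")
    case True
    then obtain q where "n = 2 * q" by blast
    with n have "x = of_int q" by simp
    then show ?thesis by simp
  next
    case False
    then obtain q where "n = 2 * q + 1" using oddE by blast
    with n have "x - 1/2 = of_int q" by simp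
    then show ?thesis by simp
  qed
qed

lemma finite_half_Ints_diffs:
  fixes u :: "nat \<Rightarrow> real"
  assumes "\<And>m m'. m \<noteq> m' \<Longrightarrow> u m - u m' \<notin> \<int>"
  shows "finite {j. 2 * (u j - u i) \<in> \<int>}"
proof -
  define D where "D = {j. u j - u i - 1/2 \<in> \<int>}"
  have singleton: "D \<subseteq> {j0}" if "j0 \<in> D" for j0
  proof
    fix j assume "j \<in> D"
    then have "(u j - u i - 1/2) - (u j0 - u i - 1/2) \<in> \<int>"
      using that unfolding D_def by (blast intro: Ints_diff)
    then have "u j - u j0 \<in> \<int>"
      by simp
    with assms show "j \<in> {j0}"
      by blast
  qed
  have "finite D"
  proof (cases "D = {}")
    case False
    then obtain j0 where "j0 \<in> D"
      by blast
    then show ?thesis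
      using finite_subset[OF singleton] by simp
  qed simp
  moreover have "{j. 2 * (u j - u i) \<in> \<int>} \<subseteq> insert i D"
  proof
    fix j assume "j \<in> {j. 2 * (u j - u i) \<in> \<int>}"
    then have "u j - u i \<in> \<int> \<or> u j - u i - 1/2 \<in> \<int>"
      by (intro Ints_or_half_Ints) simp
    with assms show "j \<in> insert i D"
      unfolding D_def by auto
  qed
  ultimately show ?thesis
    by (meson finite_insert finite_subset)
qed

lemma measure_lebesgue_ball_complex:
  assumes "r \<ge> 0"
  shows "measure lebesgue (ball (c :: complex) r) = pi * r\<^sup>2"
proof -
  have "measure lborel (ball c r) = unit_ball_vol (DIM(complex)) * r ^ DIM(complex)"
    using content_ball[OF assms, of c] by simp
  then show ?thesis using unit_ball_vol_2 by (simp add: measure_completion)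
qed

lemma lmeasurable_eps_nbhd:
  assumes "bounded G"
  shows "eps_nbhd G e \<in> lmeasurable"
proof (rule lmeasurable_open)
  have eq: "eps_nbhd G e = (\<Union>x\<in>G. ball x e)"
    unfolding eps_nbhd_def by (auto simp: ball_def)
  then show "open (eps_nbhd G e)" by auto
  obtain R where R: "\<And>x. x \<in> G \<Longrightarrow> norm x \<le> R"
    using assms bounded_iff by blast
  have "eps_nbhd G e \<subseteq> cball 0 (R + e)"
  proof
    fix y assume "y \<in> eps_nbhd G e"
    then obtain x where "x \<in> G" "dist x y < e"
      unfolding eps_nbhd_def by auto
    then show "y \<in> cball 0 (R + e)"
      using R[of x] norm_triangle_ineq2[of y x] by (simp add: dist_norm norm_minus_commute)
  qed
  then show "bounded (eps_nbhd G e)"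
    using bounded_cball bounded_subset by blast
qed

lemma measure_eps_nbhd_ge_packing:
  fixes G :: "complex set" and p :: "'a \<Rightarrow> complex"
  assumes "bounded G" "finite I" "e > 0" "p ` I \<subseteq> G"
    and sep: "\<And>k k'. k \<in> I \<Longrightarrow> k' \<in> I \<Longrightarrow> k \<noteq> k' \<Longrightarrow> 2 * e \<le> dist (p k) (p k')"
  shows "real (card I) * (pi * e\<^sup>2) \<le> measure lebesgue (eps_nbhd G e)"
proof -
  have disj: "disjoint_family_on (\<lambda>k. ball (p k) e) I"
    unfolding disjoint_family_on_def
  proof (intro ballI impI)
    fix k k' assume "k \<in> I" "k' \<in> I" "k \<noteq> k'"
    then have "2 * e \<le> dist (p k) (p k')"
      by (rule sep)
    then show "ball (p k) e \<inter> ball (p k') e = {}"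
      using dist_triangle_less_add[of "p k" _ e "p k'" e] by fastforce
  qed
  have "measure lebesgue (ball (p k) e) = pi * e\<^sup>2" for k
    by (rule measure_lebesgue_ball_complex) (use assms(3) in simp)
  then have "real (card I) * (pi * e\<^sup>2) = (\<Sum>k\<in>I. measure lebesgue (ball (p k) e))"
    by (simp only: sum_constant)
  also have "\<dots> = measure lebesgue (\<Union>k\<in>I. ball (p k) e)"
  proof (rule measure_finite_Union[symmetric])
    show "emeasure lebesgue (ball (p k) e) \<noteq> \<infinity>" for k
      using lmeasurable_ball[of "p k" e] by (simp add: fmeasurable_def)
  qed (use disj assms(2) in auto)
  also have "\<dots> \<le> measure lebesgue (eps_nbhd G e)"
  proof (rule measure_mono_fmeasurable)
    show "(\<Union>k\<in>I. ball (p k) e) \<subseteq> eps_nbhd G e"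
    proof clarify
      fix k z assume "k \<in> I" "z \<in> ball (p k) e"
      then have "p k \<in> G" "dist (p k) z < e"
        using assms(4) by auto
      then show "z \<in> eps_nbhd G e"
        unfolding eps_nbhd_def by auto
    qed
    show "(\<Union>k\<in>I. ball (p k) e) \<in> sets lebesgue"
      using assms(2) by auto
  qed (rule lmeasurable_eps_nbhd[OF assms(1)])
  finally show ?thesis .
qed

lemma card_nat_near_le:
  fixes S :: "nat set"
  assumes "finite S" "r > 0" "\<And>m. m \<in> S \<Longrightarrow> \<bar>real m - c\<bar> < r"
  shows "real (card S) \<le> 2 * r + 1"
proof (cases "S = {}")
  case False
  have "card S \<le> card {Min S..Max S}"
    using assms(1) by (intro card_mono) auto
  moreover have "Min S \<le> Max S"
    using Max_ge[OF assms(1) Min_in[OF assms(1) False]] .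
  ultimately have "real (card S) \<le> real (Max S) + 1 - real (Min S)"
    by simp
  moreover have "\<bar>real (Max S) - c\<bar> < r" "\<bar>real (Min S) - c\<bar> < r"
    using assms(1,3) False by simp_all
  ultimately show ?thesis by linarith
qed (use assms in simp)

lemma card_grid_avoiding_ge:
  fixes J :: "'a set" and h :: real
  assumes "finite J" "h > 0" "\<And>j. j \<in> J \<Longrightarrow> r j > 0"
  shows "real M + 1 - (\<Sum>j\<in>J. 2 * r j / h + 1)
           \<le> real (card ({..M} - (\<Union>j\<in>J. {m. \<bar>h * real m - s j\<bar> < r j})))"
proof -
  define B where "B j = {m \<in> {..M}. \<bar>h * real m - s j\<bar> < r j}" for j
  have card_B: "real (card (B j)) \<le> 2 * r j / h + 1" if "j \<in> J" for j
  proof -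
    have "real (card (B j)) \<le> 2 * (r j / h) + 1"
    proof (rule card_nat_near_le)
      show "finite (B j)" "r j / h > 0"
        using assms(2,3) that by (simp_all add: B_def)
      show "\<bar>real m - s j / h\<bar> < r j / h" if "m \<in> B j" for m
      proof -
        have "h * real m - s j = h * (real m - s j / h)"
          using assms(2) by (simp add: field_simps)
        then have "\<bar>h * real m - s j\<bar> = h * \<bar>real m - s j / h\<bar>"
          using assms(2) by (simp add: abs_mult)
        with that assms(2) show ?thesis
          unfolding B_def by (simp add: pos_less_divide_eq mult.commute)
      qed
    qed
    then show ?thesis by simp
  qed
  have "real (card (\<Union>j\<in>J. B j)) \<le> (\<Sum>j\<in>J. real (card (B j)))"
    using card_UN_le[OF assms(1), of B] by (metis of_nat_le_iff of_nat_sum)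
  also have "\<dots> \<le> (\<Sum>j\<in>J. 2 * r j / h + 1)"
    using card_B by (rule sum_mono)
  finally have "real (card (\<Union>j\<in>J. B j)) \<le> (\<Sum>j\<in>J. 2 * r j / h + 1)" .
  moreover have "card {..M} \<le> card ({..M} - (\<Union>j\<in>J. B j)) + card (\<Union>j\<in>J. B j)"
    using diff_card_le_card_Diff[of "\<Union>j\<in>J. B j" "{..M}"] assms(1) by (simp add: B_def)
  moreover have "{..M} - (\<Union>j\<in>J. B j) = {..M} - (\<Union>j\<in>J. {m. \<bar>h * real m - s j\<bar> < r j})"
    unfolding B_def by auto
  ultimately show ?thesis
    by simp
qed

definition crossing_param :: "complex \<Rightarrow> complex \<Rightarrow> complex \<Rightarrow> complex \<Rightarrow> real" where
  "crossing_param a d b f = Im ((b - a) * cnj f) / Im (d * cnj f)"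

lemma dist_transversal_lines_ge:
  fixes a b d f :: complex and s t :: real
  assumes "norm f = 1" "Im (d * cnj f) \<noteq> 0"
  shows "\<bar>Im (d * cnj f)\<bar> * \<bar>s - crossing_param a d b f\<bar>
           \<le> dist (a + of_real s * d) (b + of_real t * f)"
proof -
  \<comment> \<open>Multiplication by cnj f makes the second line horizontal; the distance is at least the height.\<close>
  define c where "c = Im (d * cnj f)"
  define w where "w = ((a + of_real s * d) - (b + of_real t * f)) * cnj f"
  have "f * cnj f = 1"
    using assms(1) complex_norm_square[of f] by simp
  then have "Im w = s * c - Im ((b - a) * cnj f)"
    unfolding w_def c_def by (simp add: algebra_simps)
  also have "\<dots> = c * (s - crossing_param a d b f)"
    using assms(2) unfolding c_def crossing_param_def by (simp add: field_simps)
  finally have "\<bar>Im w\<bar> = \<bar>c\<bar> * \<bar>s - crossing_param a d b f\<bar>"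
    by (simp add: abs_mult)
  moreover have "norm w = dist (a + of_real s * d) (b + of_real t * f)"
    unfolding w_def norm_mult dist_norm using assms(1) by simp
  ultimately show ?thesis
    using abs_Im_le_cmod[of w] unfolding c_def by linarith
qed

lemma dist_grid_points_on_transversal_segments_ge:
  fixes a d :: "'a \<Rightarrow> complex" and h :: real
  assumes "h > 0" "I \<subseteq> F \<times> UNIV"
    and unit: "\<And>i. i \<in> F \<Longrightarrow> norm (d i) = 1"
    and transversal: "\<And>i j. i \<in> F \<Longrightarrow> j \<in> F \<Longrightarrow> i \<noteq> j \<Longrightarrow> Im (d i * cnj (d j)) \<noteq> 0"
    and away: "\<And>i m j. (i, m) \<in> I \<Longrightarrow> j \<in> F \<Longrightarrow> j \<noteq> i \<Longrightarrow>
      h \<le> \<bar>Im (d i * cnj (d j))\<bar> * \<bar>h * real m - crossing_param (a i) (d i) (a j) (d j)\<bar>"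
    and "(i, m) \<in> I" "(j, n) \<in> I" "(i, m) \<noteq> (j, n)"
  shows "h \<le> dist (a i + of_real (h * real m) * d i) (a j + of_real (h * real n) * d j)"
proof -
  have "i \<in> F" "j \<in> F"
    using assms(2,6,7) by auto
  show ?thesis
  proof (cases "i = j")
    case True
    with assms(8) have "1 \<le> \<bar>real m - real n\<bar>"
      by auto
    have "a i + of_real (h * real m) * d i - (a j + of_real (h * real n) * d j)
            = of_real (h * (real m - real n)) * d i"
      unfolding True by (simp add: algebra_simps)
    then have "dist (a i + of_real (h * real m) * d i) (a j + of_real (h * real n) * d j)
                 = norm (of_real (h * (real m - real n)) * d i)"
      by (simp only: dist_norm)
    also have "\<dots> = h * \<bar>real m - real n\<bar>"
      using unit[OF \<open>i \<in> F\<close>] assms(1) by (simp only: norm_mult norm_of_real) (simp add: abs_mult)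
    finally show ?thesis
      using \<open>1 \<le> \<bar>real m - real n\<bar>\<close> assms(1) by simp
  next
    case False
    have "h \<le> \<bar>Im (d i * cnj (d j))\<bar> * \<bar>h * real m - crossing_param (a i) (d i) (a j) (d j)\<bar>"
      using away[OF assms(6) \<open>j \<in> F\<close> not_sym[OF False]] .
    also have "\<dots> \<le> dist (a i + of_real (h * real m) * d i) (a j + of_real (h * real n) * d j)"
      by (rule dist_transversal_lines_ge[OF unit[OF \<open>j \<in> F\<close>] transversal[OF \<open>i \<in> F\<close> \<open>j \<in> F\<close> False]])
    finally show ?thesis .
  qed
qed

text \<open>Indices (i, m) of the points a i + h m d i, 0 <= h m <= 1, of the segments, except those whose
  parameter h m lies within h / |sin angle| of the crossing with the line through another segment.\<close>
definition grid_avoiding_crossings ::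
    "'a set \<Rightarrow> ('a \<Rightarrow> complex) \<Rightarrow> ('a \<Rightarrow> complex) \<Rightarrow> real \<Rightarrow> ('a \<times> nat) set" where
  "grid_avoiding_crossings F a d h = (SIGMA i:F. {..nat \<lfloor>1 / h\<rfloor>} - (\<Union>j\<in>F - {i}.
     {m. \<bar>h * real m - crossing_param (a i) (d i) (a j) (d j)\<bar> < h / \<bar>Im (d i * cnj (d j))\<bar>}))"

lemma card_grid_avoiding_crossings_ge:
  fixes F :: "'a set" and a d :: "'a \<Rightarrow> complex" and h :: real
  assumes "finite F" "h > 0"
    and transversal: "\<And>i j. i \<in> F \<Longrightarrow> j \<in> F \<Longrightarrow> i \<noteq> j \<Longrightarrow> Im (d i * cnj (d j)) \<noteq> 0"
  shows "real (card F) / h - (\<Sum>i\<in>F. \<Sum>j\<in>F - {i}. 2 / \<bar>Im (d i * cnj (d j))\<bar> + 1)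
           \<le> real (card (grid_avoiding_crossings F a d h))"
proof -
  define M where "M = nat \<lfloor>1 / h\<rfloor>"
  define \<sigma> where "\<sigma> i j = \<bar>Im (d i * cnj (d j))\<bar>" for i j
  define good where "good i = {..M} - (\<Union>j\<in>F - {i}.
     {m. \<bar>h * real m - crossing_param (a i) (d i) (a j) (d j)\<bar> < h / \<sigma> i j})" for i
  have "real M = of_int \<lfloor>1 / h\<rfloor>"
    unfolding M_def using assms(2) by simp
  then have "1 / h \<le> real M + 1"
    by linarith
  then have "real (card F) / h \<le> real (card F) * (real M + 1)"
    using mult_left_mono[of "1 / h" "real M + 1" "real (card F)"] by simp
  then have "real (card F) / h - (\<Sum>i\<in>F. \<Sum>j\<in>F - {i}. 2 / \<sigma> i j + 1)
               \<le> (\<Sum>i\<in>F. real M + 1 - (\<Sum>j\<in>F - {i}. 2 * (h / \<sigma> i j) / h + 1))"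
    using assms(2) by (simp add: sum_subtractf)
  also have "\<dots> \<le> (\<Sum>i\<in>F. real (card (good i)))"
    unfolding good_def using assms(1,2) transversal
    by (intro sum_mono card_grid_avoiding_ge) (auto simp: \<sigma>_def)
  also have "\<dots> = real (card (grid_avoiding_crossings F a d h))"
    using assms(1) by (simp add: grid_avoiding_crossings_def good_def M_def \<sigma>_def)
  finally show ?thesis
    unfolding \<sigma>_def .
qed

lemma grid_avoiding_crossings_away:
  assumes "(i, m) \<in> grid_avoiding_crossings F a d h" "j \<in> F" "j \<noteq> i"
    and "h > 0" "Im (d i * cnj (d j)) \<noteq> 0"
  shows "h \<le> \<bar>Im (d i * cnj (d j))\<bar> * \<bar>h * real m - crossing_param (a i) (d i) (a j) (d j)\<bar>"
proof -
  from assms(1-3) have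
    "\<not> \<bar>h * real m - crossing_param (a i) (d i) (a j) (d j)\<bar> < h / \<bar>Im (d i * cnj (d j))\<bar>"
    unfolding grid_avoiding_crossings_def by blast
  with assms(4,5) show ?thesis
    by (simp add: not_less pos_divide_le_eq mult.commute)
qed

lemma measure_eps_nbhd_ge_card_grid:
  fixes G :: "complex set" and F :: "'a set" and a d :: "'a \<Rightarrow> complex"
  assumes "bounded G" "finite F" "e > 0"
    and seg: "\<And>i s. i \<in> F \<Longrightarrow> 0 \<le> s \<Longrightarrow> s \<le> 1 \<Longrightarrow> a i + of_real s * d i \<in> G"
    and unit: "\<And>i. i \<in> F \<Longrightarrow> norm (d i) = 1"
    and transversal: "\<And>i j. i \<in> F \<Longrightarrow> j \<in> F \<Longrightarrow> i \<noteq> j \<Longrightarrow> Im (d i * cnj (d j)) \<noteq> 0"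
  shows "real (card (grid_avoiding_crossings F a d (2 * e))) * (pi * e\<^sup>2)
           \<le> measure lebesgue (eps_nbhd G e)"
proof -
  define h where "h = 2 * e"
  define I where "I = grid_avoiding_crossings F a d h"
  have h: "h > 0"
    using assms(3) unfolding h_def by simp
  have I: "I \<subseteq> F \<times> {..nat \<lfloor>1 / h\<rfloor>}"
    unfolding I_def grid_avoiding_crossings_def by blast
  have "real (card I) * (pi * e\<^sup>2) \<le> measure lebesgue (eps_nbhd G e)"
  proof (rule measure_eps_nbhd_ge_packing[OF \<open>bounded G\<close> _ \<open>e > 0\<close>])
    show "finite I"
      using finite_subset[OF I] \<open>finite F\<close> by simp
    show "(\<lambda>(i, m). a i + of_real (h * real m) * d i) ` I \<subseteq> G"
    proof clarify
      fix i m assume "(i, m) \<in> I"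
      then have "i \<in> F" "real m \<le> 1 / h"
        using I h by (auto simp: le_nat_iff le_floor_iff)
      then show "a i + of_real (h * real m) * d i \<in> G"
        using h by (intro seg) (simp_all add: pos_le_divide_eq mult.commute)
    qed
    have away: "h \<le> \<bar>Im (d i * cnj (d j))\<bar> * \<bar>h * real m - crossing_param (a i) (d i) (a j) (d j)\<bar>"
      if "(i, m) \<in> I" "j \<in> F" "j \<noteq> i" for i m j
      using that I h transversal[of i j]
      unfolding I_def by (intro grid_avoiding_crossings_away) auto
    show "2 * e \<le> dist ((\<lambda>(i, m). a i + of_real (h * real m) * d i) k)
                          ((\<lambda>(i, m). a i + of_real (h * real m) * d i) k')"
      if "k \<in> I" "k' \<in> I" "k \<noteq> k'" for k k'
    proof -
      from I have "I \<subseteq> F \<times> UNIV"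
        by blast
      from dist_grid_points_on_transversal_segments_ge[OF h this unit transversal away]
      show ?thesis
        using that unfolding h_def by (cases k, cases k') simp
    qed
  qed
  then show ?thesis
    unfolding I_def h_def .
qed

lemma measure_eps_nbhd_transversal_segments_ge:
  fixes G :: "complex set" and F :: "'a set" and a d :: "'a \<Rightarrow> complex"
  assumes "bounded G" "finite F"
    and seg: "\<And>i s. i \<in> F \<Longrightarrow> 0 \<le> s \<Longrightarrow> s \<le> 1 \<Longrightarrow> a i + of_real s * d i \<in> G"
    and unit: "\<And>i. i \<in> F \<Longrightarrow> norm (d i) = 1"
    and transversal: "\<And>i j. i \<in> F \<Longrightarrow> j \<in> F \<Longrightarrow> i \<noteq> j \<Longrightarrow> Im (d i * cnj (d j)) \<noteq> 0"
  shows "\<exists>C. \<forall>\<^sub>F e in at_right 0.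
           pi * real (card F) / 2 * e - C * e\<^sup>2 \<le> measure lebesgue (eps_nbhd G e)"
proof -
  define K where "K = (\<Sum>i\<in>F. \<Sum>j\<in>F - {i}. 2 / \<bar>Im (d i * cnj (d j))\<bar> + 1)"
  have "pi * real (card F) / 2 * e - pi * K * e\<^sup>2 \<le> measure lebesgue (eps_nbhd G e)"
    if "e > 0" for e
  proof -
    have "pi * real (card F) / 2 * e - pi * K * e\<^sup>2 = (real (card F) / (2 * e) - K) * (pi * e\<^sup>2)"
      using that by (simp add: field_simps power2_eq_square)
    also have "\<dots> \<le> real (card (grid_avoiding_crossings F a d (2 * e))) * (pi * e\<^sup>2)"
      unfolding K_def using \<open>finite F\<close> that transversal
      by (intro mult_right_mono card_grid_avoiding_crossings_ge) auto
    also have "\<dots> \<le> measure lebesgue (eps_nbhd G e)"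
      using assms that by (intro measure_eps_nbhd_ge_card_grid)
    finally show ?thesis .
  qed
  then show ?thesis
    using eventually_at_right_less[of 0] by (intro exI[of _ "pi * K"]) (auto elim: eventually_mono)
qed

lemma filterlim_div_at_right_0_at_top:
  fixes f :: "real \<Rightarrow> real"
  assumes "\<And>N::nat. \<exists>C. \<forall>\<^sub>F e in at_right 0. real N * e - C * e\<^sup>2 \<le> f e"
  shows "filterlim (\<lambda>e. f e / e) at_top (at_right 0)"
  unfolding filterlim_at_top
proof
  fix Z :: real
  obtain N :: nat where N: "Z + 1 \<le> real N"
    using real_arch_simple by blast
  obtain C where C: "\<forall>\<^sub>F e in at_right 0. real N * e - C * e\<^sup>2 \<le> f e"
    using assms by blast
  have "((\<lambda>e. C * e) \<longlongrightarrow> 0) (at_right 0)"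
    by (intro tendsto_mult_right_zero tendsto_ident_at)
  then have "\<forall>\<^sub>F e in at_right 0. C * e < 1"
    by (rule order_tendstoD) simp
  with C show "\<forall>\<^sub>F e in at_right 0. Z \<le> f e / e"
    using eventually_at_right_less[of 0]
  proof eventually_elim
    case (elim e)
    then have "(real N - C * e) * e \<le> f e"
      by (simp add: power2_eq_square algebra_simps)
    then have "real N - C * e \<le> f e / e"
      using elim by (simp add: pos_le_divide_eq)
    with N elim show ?case by linarith
  qed
qed

lemma curl_segment_in_curlicue:
  assumes "0 \<le> s" "s \<le> 1"
  shows "curl_vertex u n + of_real s * circle_map (u n) \<in> curlicue u"
proof (cases "s < 1")
  case True
  then have "\<lfloor>real n + s\<rfloor> = int n"
    using assms by linarith
  then have "curl_param u (real n + s) = curl_vertex u n + of_real s * circle_map (u n)"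
    unfolding curl_param_def by simp
  then show ?thesis
    unfolding curlicue_def using assms by (metis atLeast_iff image_eqI le_add_same_cancel1 of_nat_0_le_iff order_trans)
next
  case False
  with assms have "s = 1"
    by simp
  then have "curl_param u (real (Suc n)) = curl_vertex u n + of_real s * circle_map (u n)"
    unfolding curl_param_def curl_vertex_def by (simp only: floor_of_nat nat_int) simp
  then show ?thesis
    unfolding curlicue_def by (metis atLeast_iff image_eqI of_nat_0_le_iff)
qed

lemma curlicue_boundedI:
  assumes "\<And>n. norm (curl_vertex u n) \<le> R"
  shows "curlicue_bounded u"
  unfolding curlicue_bounded_def bounded_iff
proof (intro exI[of _ "R + 1"] ballI)
  fix z assume "z \<in> curlicue u"
  then obtain s where z: "z = curl_param u s"
    unfolding curlicue_def by blast
  have "norm z \<le> norm (curl_vertex u (nat \<lfloor>s\<rfloor>))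
                  + norm (of_real (s - of_int \<lfloor>s\<rfloor>) * circle_map (u (nat \<lfloor>s\<rfloor>)))"
    unfolding z curl_param_def by (rule norm_triangle_ineq)
  moreover have "norm (of_real (s - of_int \<lfloor>s\<rfloor>) * circle_map (u (nat \<lfloor>s\<rfloor>))) \<le> 1"
    unfolding norm_mult norm_of_real norm_circle_map mult_1_right by linarith
  ultimately show "norm z \<le> R + 1"
    using assms[of "nat \<lfloor>s\<rfloor>"] by linarith
qed

lemma circle_map_of_nat_mult: "circle_map (real n * x) = circle_map x ^ n"
  by (simp only: circle_map_def Complex.DeMoivre) (simp add: algebra_simps)

lemma curlicue_bounded_if_arithmetic_mod_1:
  assumes "\<rho> \<notin> \<int>" and arithmetic: "\<And>n. u n - (x0 + real n * \<rho>) \<in> \<int>"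
  shows "curlicue_bounded u"
proof -
  define w where "w = circle_map \<rho>"
  have "circle_map (u n) = circle_map x0 * w ^ n" for n
  proof -
    have "circle_map (u n) = circle_map (x0 + real n * \<rho>)"
      using arithmetic by (simp add: circle_map_eq_iff)
    then show ?thesis
      unfolding w_def by (simp add: circle_map_add circle_map_of_nat_mult)
  qed
  then have vertex: "curl_vertex u n = circle_map x0 * (\<Sum>k<n. w ^ k)" for n
    unfolding curl_vertex_def by (simp add: sum_distrib_left)
  have "w \<noteq> 1"
  proof
    assume "w = 1"
    then have "circle_map \<rho> = circle_map 0"
      unfolding w_def by (simp add: circle_map_def)
    with \<open>\<rho> \<notin> \<int>\<close> show False
      by (simp add: circle_map_eq_iff)
  qed
  have "norm (curl_vertex u n) \<le> 2 / norm (w - 1)" for n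
  proof -
    have "norm (curl_vertex u n) = norm (w ^ n - 1) / norm (w - 1)"
      unfolding vertex geometric_sum[OF \<open>w \<noteq> 1\<close>] by (simp add: norm_mult norm_divide)
    moreover have "norm (w ^ n - 1) \<le> 2"
      using norm_triangle_ineq4[of "w ^ n" 1] by (simp add: w_def norm_power)
    ultimately show ?thesis
      by (simp add: divide_right_mono)
  qed
  then show ?thesis
    by (rule curlicue_boundedI)
qed

lemma lift_of_rotation:
  assumes lift: "is_lift Phi phi" and rotation: "\<forall>z\<in>sphere 0 1. phi z = circle_map \<rho> * z"
  shows "\<exists>c\<in>\<int>. \<forall>x. Phi x = x + \<rho> + c"
proof -
  have "continuous_on UNIV (\<lambda>x. x + \<rho>)"
    by (intro continuous_intros)
  moreover have "circle_map (Phi x) = circle_map (x + \<rho>)" for x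
  proof -
    have "circle_map (Phi x) = phi (circle_map x)"
      using lift unfolding is_lift_def by metis
    also have "\<dots> = circle_map (x + \<rho>)"
      using rotation by (simp add: circle_map_add mult.commute)
    finally show ?thesis .
  qed
  ultimately show ?thesis
    using continuous_lifts_differ_by_int[OF continuous_on_lift[OF lift]] by metis
qed

lemma curlicue_bounded_rotation_orbit:
  assumes "is_lift Phi phi" "\<forall>z\<in>sphere 0 1. phi z = circle_map \<rho> * z"
    and "\<rho> \<notin> \<int>" "\<And>n. u n = (Phi ^^ n) x0"
  shows "curlicue_bounded u"
proof -
  obtain c where c: "c \<in> \<int>" "\<And>x. Phi x = x + \<rho> + c"
    using lift_of_rotation[OF assms(1,2)] by blast
  have "u n - (x0 + real n * \<rho>) = real n * c" for n
    unfolding assms(4) by (induction n) (simp_all add: c algebra_simps)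
  with c(1) have "u n - (x0 + real n * \<rho>) \<in> \<int>" for n
    by simp
  with assms(3) show ?thesis
    by (rule curlicue_bounded_if_arithmetic_mod_1)
qed

lemma exists_transversal_edges:
  fixes u :: "nat \<Rightarrow> real"
  assumes "\<And>m m'. m \<noteq> m' \<Longrightarrow> u m - u m' \<notin> \<int>"
  shows "\<exists>F. finite F \<and> card F = N \<and>
           (\<forall>i\<in>F. \<forall>j\<in>F. i \<noteq> j \<longrightarrow> Im (circle_map (u i) * cnj (circle_map (u j))) \<noteq> 0)"
proof -
  have sym: "2 * (u j - u i) \<in> \<int> \<Longrightarrow> 2 * (u i - u j) \<in> \<int>" for i j
    using minus_in_Ints_iff[of "2 * (u j - u i)"] by simp
  obtain F where F: "finite F" "card F = N" "pairwise (\<lambda>i j. 2 * (u j - u i) \<notin> \<int>) F"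
    by (rule finite_pairwise_subset_exists[OF infinite_UNIV_nat finite_half_Ints_diffs[OF assms] sym])
  moreover have "Im (circle_map (u i) * cnj (circle_map (u j))) \<noteq> 0"
    if "i \<in> F" "j \<in> F" "i \<noteq> j" for i j
    using pairwiseD[OF F(3) that(2,1) not_sym[OF that(3)]]
    unfolding Im_circle_map_mult_cnj sin_times_pi_eq_0 .
  ultimately show ?thesis
    by blast
qed

lemma superficial_if_bounded_distinct_mod_1:
  assumes bounded: "curlicue_bounded u" and distinct: "\<And>m m'. m \<noteq> m' \<Longrightarrow> u m - u m' \<notin> \<int>"
  shows "superficial u"
proof -
  have "\<exists>C. \<forall>\<^sub>F e in at_right 0. real N * e - C * e\<^sup>2 \<le> measure lebesgue (eps_nbhd (curlicue u) e)"
    for N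
  proof -
    obtain F where F: "finite F" "card F = N"
      "\<forall>i\<in>F. \<forall>j\<in>F. i \<noteq> j \<longrightarrow> Im (circle_map (u i) * cnj (circle_map (u j))) \<noteq> 0"
      using exists_transversal_edges[where u = u and N = N, OF distinct] by blast
    have "bounded (curlicue u)"
      using bounded unfolding curlicue_bounded_def .
    moreover note F(1)
    moreover have "\<And>i s. i \<in> F \<Longrightarrow> 0 \<le> s \<Longrightarrow> s \<le> 1 \<Longrightarrow>
        curl_vertex u i + of_real s * circle_map (u i) \<in> curlicue u"
      by (rule curl_segment_in_curlicue)
    moreover have "\<And>i. i \<in> F \<Longrightarrow> norm (circle_map (u i)) = 1"
      by (rule norm_circle_map)
    ultimately have "\<exists>C. \<forall>\<^sub>F e in at_right 0.
        pi * real (card F) / 2 * e - C * e\<^sup>2 \<le> measure lebesgue (eps_nbhd (curlicue u) e)"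
      using F(3)[rule_format] by (rule measure_eps_nbhd_transversal_segments_ge)
    then obtain C where C: "\<forall>\<^sub>F e in at_right 0.
        pi * real N / 2 * e - C * e\<^sup>2 \<le> measure lebesgue (eps_nbhd (curlicue u) e)"
      unfolding F(2) by blast
    have "2 * real N \<le> pi * real N"
      using pi_gt3 by (intro mult_right_mono) auto
    then have N_le: "real N * e \<le> pi * real N / 2 * e" if "e > 0" for e
      using that by (intro mult_right_mono) auto
    from C eventually_at_right_less[of 0] have "\<forall>\<^sub>F e in at_right 0.
            real N * e - C * e\<^sup>2 \<le> measure lebesgue (eps_nbhd (curlicue u) e)"
    proof eventually_elim
      case (elim e)
      with N_le[of e] show ?case by linarith
    qed
    then show ?thesis ..
  qed
  then have "filterlim (\<lambda>e. measure lebesgue (eps_nbhd (curlicue u) e) / e) at_top (at_right 0)"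
    by (rule filterlim_div_at_right_0_at_top)
  with bounded show ?thesis
    unfolding superficial_def by simp
qed

theorem proposition2p8:
  fixes phi :: "complex \<Rightarrow> complex" and Phi :: "real \<Rightarrow> real"
    and x0 :: real and \<rho> :: real and u :: "nat \<Rightarrow> real"
  assumes "orient_pres_circle_homeo phi"
    and "is_lift Phi phi"
    and "\<rho> = rotation_number Phi"
    and "\<rho> \<notin> \<rat>"
    and "\<And>n. u n = (Phi ^^ n) x0"
  shows "((\<forall>z\<in>sphere 0 1. phi z = circle_map \<rho> * z) \<longrightarrow>
            curlicue_bounded u \<and> superficial u)
       \<and> (curlicue_bounded u \<longrightarrow> superficial u)"
proof -
  have "u m - u m' \<notin> \<int>" if "m \<noteq> m'" for m m'
    unfolding assms(5)
    using orbit_diff_not_Ints[OF assms(2) mono_lift[OF assms(1,2)] _ that] assms(3,4) by simp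
  then have bounded_superficial: "curlicue_bounded u \<longrightarrow> superficial u"
    using superficial_if_bounded_distinct_mod_1 by blast
  have "\<rho> \<notin> \<int>"
    using assms(4) Ints_subset_Rats by blast
  then have "(\<forall>z\<in>sphere 0 1. phi z = circle_map \<rho> * z) \<longrightarrow> curlicue_bounded u"
    using curlicue_bounded_rotation_orbit[OF assms(2) _ _ assms(5)] by blast
  with bounded_superficial show ?thesis
    by blast
qed

end
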